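(* Let $\varphi$ be a flow on a locally compact metric space $X$, let $N\subset X$ be an isolating neighborhood and let $\gamma:\mathbb R\to X$ be a full solution. The following are equivalent: (i) $\gamma^{-1}(N)$ is right infinite (respectively left infinite); (ii) $\gamma$ wades through $N$ in plus infinity (respectively minus infinity); (iii) $\operatorname{Inv}N\cap\omega(\gamma)\ne\emptyset$ (respectively $\operatorname{Inv}N\cap\alpha(\gamma)\neq\emptyset$).
   Context: A full solution is a map $\gamma:\mathbb R\to X$ with $\gamma(s+t)=\varphi(\gamma(s),t)$. $\alpha(\gamma)=\bigcap_{t<0}\operatorname{cl}\gamma((-\infty,t])$, $\omega(\gamma)=\bigcap_{t>0}\operatorname{cl}\gamma([t,\infty))$. $\operatorname{Inv}N=\{x\in N\mid\varphi(x,\mathbb R)\subset N\}$; an isolating neighborhood is a compact $N$ with $\operatorname{Inv}N\subset\operatorname{int}N$. A set $A\subset\mathbb R$ is right infinite if $\sup\{b-a\mid a,b\ge0,\ [a,b]\subset A\}=\infty$, and left infinite if $\sup\{b-a\mid a,b\le0,\ [a,b]\subset A\}=\infty$. $\gamma$ wades through $N$ in plus infinity if there are real sequences $(t^-_n),(t^+_n)$ with $t^-_n\to+\infty$, $t^+_n-t^-_n\to+\infty$ and $\gamma([t^-_n,t^+_n])\subset N$ for all $n$; it wades through $N$ in minus infinity if there are such sequences with $t^+_n\to-\infty$, $t^+_n-t^-_n\to+\infty$ and $\gamma([t^-_n,t^+_n])\subset N$ for all $n$. *)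

theory Defs
  imports "HOL-Analysis.Analysis" "HOL-Library.Extended_Real"
begin

definition flow :: "('a::metric_space \<Rightarrow> real \<Rightarrow> 'a) \<Rightarrow> bool" where
  "flow \<phi> \<longleftrightarrow> continuous_on UNIV (\<lambda>p. \<phi> (fst p) (snd p)) \<and>
     (\<forall>x. \<phi> x 0 = x) \<and> (\<forall>x s t. \<phi> (\<phi> x s) t = \<phi> x (s + t))"

definition full_solution :: "('a \<Rightarrow> real \<Rightarrow> 'a) \<Rightarrow> (real \<Rightarrow> 'a) \<Rightarrow> bool" where
  "full_solution \<phi> \<gamma> \<longleftrightarrow> (\<forall>s t. \<gamma> (s + t) = \<phi> (\<gamma> s) t)"

definition alpha_limit :: "(real \<Rightarrow> 'a::topological_space) \<Rightarrow> 'a set" where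
  "alpha_limit \<gamma> = (\<Inter>t\<in>{..<0}. closure (\<gamma> ` {..t}))"

definition omega_limit :: "(real \<Rightarrow> 'a::topological_space) \<Rightarrow> 'a set" where
  "omega_limit \<gamma> = (\<Inter>t\<in>{0<..}. closure (\<gamma> ` {t..}))"

definition Inv :: "('a \<Rightarrow> real \<Rightarrow> 'a) \<Rightarrow> 'a set \<Rightarrow> 'a set" where
  "Inv \<phi> N = {x\<in>N. range (\<phi> x) \<subseteq> N}"

definition isolating_neighborhood :: "('a::topological_space \<Rightarrow> real \<Rightarrow> 'a) \<Rightarrow> 'a set \<Rightarrow> bool" where
  "isolating_neighborhood \<phi> N \<longleftrightarrow> compact N \<and> Inv \<phi> N \<subseteq> interior N"

definition right_infinite :: "real set \<Rightarrow> bool" where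
  "right_infinite A \<longleftrightarrow>
     (SUP p\<in>{(a, b). 0 \<le> a \<and> 0 \<le> b \<and> {a..b} \<subseteq> A}. ereal (snd p - fst p)) = \<infinity>"

definition left_infinite :: "real set \<Rightarrow> bool" where
  "left_infinite A \<longleftrightarrow>
     (SUP p\<in>{(a, b). a \<le> 0 \<and> b \<le> 0 \<and> {a..b} \<subseteq> A}. ereal (snd p - fst p)) = \<infinity>"

definition wades_plus :: "(real \<Rightarrow> 'a) \<Rightarrow> 'a set \<Rightarrow> bool" where
  "wades_plus \<gamma> N \<longleftrightarrow> (\<exists>tm tp :: nat \<Rightarrow> real.
     filterlim tm at_top sequentially \<and>
     filterlim (\<lambda>n. tp n - tm n) at_top sequentially \<and>
     (\<forall>n. \<gamma> ` {tm n..tp n} \<subseteq> N))"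

definition wades_minus :: "(real \<Rightarrow> 'a) \<Rightarrow> 'a set \<Rightarrow> bool" where
  "wades_minus \<gamma> N \<longleftrightarrow> (\<exists>tm tp :: nat \<Rightarrow> real.
     filterlim tp at_bot sequentially \<and>
     filterlim (\<lambda>n. tp n - tm n) at_top sequentially \<and>
     (\<forall>n. \<gamma> ` {tm n..tp n} \<subseteq> N))"

end

theory Submission
  imports Defs
begin

lemma SUP_ereal_eq_infinity_iff:
  "(SUP i\<in>I. ereal (f i)) = \<infinity> \<longleftrightarrow> (\<forall>r. \<exists>i\<in>I. r < f i)"
proof -
  have "(SUP i\<in>I. ereal (f i)) = \<infinity> \<longleftrightarrow> (\<forall>x<\<infinity>. \<exists>i\<in>I. x < ereal (f i))"
    unfolding top_ereal_def[symmetric] by (rule SUP_eq_top_iff)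
  also have "\<dots> \<longleftrightarrow> (\<forall>r. \<exists>i\<in>I. r < f i)"
  proof
    assume *: "\<forall>x<\<infinity>. \<exists>i\<in>I. x < ereal (f i)"
    show "\<forall>r. \<exists>i\<in>I. r < f i"
    proof
      fix r
      show "\<exists>i\<in>I. r < f i"
        using *[rule_format, of "ereal r"] by auto
    qed
  next
    assume *: "\<forall>r. \<exists>i\<in>I. r < f i"
    show "\<forall>x<\<infinity>. \<exists>i\<in>I. x < ereal (f i)"
    proof (intro allI impI)
      fix x :: ereal
      assume "x < \<infinity>"
      then show "\<exists>i\<in>I. x < ereal (f i)"
        using * by (cases x) auto
    qed
  qed
  finally show ?thesis .
qed

lemma right_infinite_iff: "right_infinite A \<longleftrightarrow> (\<forall>T. \<exists>s\<ge>T. {s..s + T} \<subseteq> A)"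
proof -
  have "right_infinite A \<longleftrightarrow> (\<forall>r. \<exists>a b. 0 \<le> a \<and> 0 \<le> b \<and> {a..b} \<subseteq> A \<and> r < b - a)"
    by (auto simp: right_infinite_def SUP_ereal_eq_infinity_iff)
  also have "\<dots> \<longleftrightarrow> (\<forall>T. \<exists>s\<ge>T. {s..s + T} \<subseteq> A)"
  proof (intro iffI allI)
    fix T :: real
    assume "\<forall>r. \<exists>a b. 0 \<le> a \<and> 0 \<le> b \<and> {a..b} \<subseteq> A \<and> r < b - a"
    then obtain a b where ab: "0 \<le> a" "{a..b} \<subseteq> A" "2 * \<bar>T\<bar> < b - a"
      by blast
    then have "{a + \<bar>T\<bar>..a + \<bar>T\<bar> + T} \<subseteq> {a..b}" "T \<le> a + \<bar>T\<bar>"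
      by auto
    then show "\<exists>s\<ge>T. {s..s + T} \<subseteq> A"
      using ab(2) by (meson order_trans)
  next
    fix r :: real
    assume "\<forall>T. \<exists>s\<ge>T. {s..s + T} \<subseteq> A"
    then obtain s where "\<bar>r\<bar> + 1 \<le> s" "{s..s + (\<bar>r\<bar> + 1)} \<subseteq> A"
      by blast
    then show "\<exists>a b. 0 \<le> a \<and> 0 \<le> b \<and> {a..b} \<subseteq> A \<and> r < b - a"
      by (intro exI[of _ s] exI[of _ "s + (\<bar>r\<bar> + 1)"]) auto
  qed
  finally show ?thesis .
qed

lemma right_infinite_reflect: "right_infinite (uminus -` A) \<longleftrightarrow> left_infinite A"
proof -
  have reflect: "{- b..- a} \<subseteq> uminus -` A \<longleftrightarrow> {a..b} \<subseteq> A" for a b :: real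
    by (simp flip: image_subset_iff_subset_vimage)
  have "(\<exists>a b. 0 \<le> a \<and> 0 \<le> b \<and> {a..b} \<subseteq> uminus -` A \<and> r < b - a) \<longleftrightarrow>
        (\<exists>a b. a \<le> 0 \<and> b \<le> 0 \<and> {a..b} \<subseteq> A \<and> r < b - a)" for r
  proof
    assume "\<exists>a b. 0 \<le> a \<and> 0 \<le> b \<and> {a..b} \<subseteq> uminus -` A \<and> r < b - a"
    then obtain a b where "0 \<le> a" "0 \<le> b" "{- (- a)..- (- b)} \<subseteq> uminus -` A" "r < b - a"
      by auto
    then show "\<exists>a b. a \<le> 0 \<and> b \<le> 0 \<and> {a..b} \<subseteq> A \<and> r < b - a"
      unfolding reflect by (intro exI[of _ "- b"] exI[of _ "- a"]) auto
  next
    assume "\<exists>a b. a \<le> 0 \<and> b \<le> 0 \<and> {a..b} \<subseteq> A \<and> r < b - a"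
    then obtain a b where "a \<le> 0" "b \<le> 0" "{- b..- a} \<subseteq> uminus -` A" "r < b - a"
      unfolding reflect by blast
    then show "\<exists>a b. 0 \<le> a \<and> 0 \<le> b \<and> {a..b} \<subseteq> uminus -` A \<and> r < b - a"
      by (intro exI[of _ "- b"] exI[of _ "- a"]) auto
  qed
  then show ?thesis
    by (auto simp: right_infinite_def left_infinite_def SUP_ereal_eq_infinity_iff)
qed

lemma wades_plus_iff: "wades_plus \<gamma> N \<longleftrightarrow> (\<forall>T. \<exists>s\<ge>T. \<gamma> ` {s..s + T} \<subseteq> N)"
proof
  assume "wades_plus \<gamma> N"
  then obtain tm tp :: "nat \<Rightarrow> real" where tm: "filterlim tm at_top sequentially"
    and len: "filterlim (\<lambda>n. tp n - tm n) at_top sequentially"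
    and stay: "\<And>n. \<gamma> ` {tm n..tp n} \<subseteq> N"
    unfolding wades_plus_def by blast
  show "\<forall>T. \<exists>s\<ge>T. \<gamma> ` {s..s + T} \<subseteq> N"
  proof
    fix T :: real
    have "eventually (\<lambda>n. T \<le> tm n) sequentially"
      using tm unfolding filterlim_at_top by blast
    moreover have "eventually (\<lambda>n. T \<le> tp n - tm n) sequentially"
      using len unfolding filterlim_at_top by blast
    ultimately have "eventually (\<lambda>n. T \<le> tm n \<and> T \<le> tp n - tm n) sequentially"
      by (rule eventually_conj)
    then obtain n where n: "T \<le> tm n" "T \<le> tp n - tm n"
      using eventually_happens'[OF sequentially_bot] by blast
    then have "\<gamma> ` {tm n..tm n + T} \<subseteq> \<gamma> ` {tm n..tp n}"
      by (intro image_mono) simp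
    then show "\<exists>s\<ge>T. \<gamma> ` {s..s + T} \<subseteq> N"
      using stay[of n] n(1) by blast
  qed
next
  assume "\<forall>T. \<exists>s\<ge>T. \<gamma> ` {s..s + T} \<subseteq> N"
  then have "\<forall>n::nat. \<exists>s\<ge>real n. \<gamma> ` {s..s + real n} \<subseteq> N"
    by blast
  then obtain s where s: "\<And>n::nat. real n \<le> s n" "\<And>n. \<gamma> ` {s n..s n + real n} \<subseteq> N"
    by metis
  have "filterlim s at_top sequentially"
    by (rule filterlim_at_top_mono[OF filterlim_real_sequentially]) (simp add: s)
  moreover have "filterlim (\<lambda>n. (s n + real n) - s n) at_top sequentially"
    by (simp add: filterlim_real_sequentially)
  ultimately show "wades_plus \<gamma> N"
    unfolding wades_plus_def using s(2) by (intro exI[of _ s] exI[of _ "\<lambda>n. s n + real n"]) simp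
qed

lemma right_infinite_vimage_iff_wades_plus: "right_infinite (\<gamma> -` N) \<longleftrightarrow> wades_plus \<gamma> N"
  by (simp add: right_infinite_iff wades_plus_iff image_subset_iff_subset_vimage)

lemma image_reflect_atLeastAtMost: "(\<lambda>t. \<gamma> (- t)) ` {a..b::real} = \<gamma> ` {- b..- a}"
  by (simp add: image_image[of \<gamma> uminus, symmetric])

lemma image_reflect_atLeast: "(\<lambda>t. \<gamma> (- t)) ` {a::real..} = \<gamma> ` {..- a}"
  by (simp add: image_image[of \<gamma> uminus, symmetric])

lemma wades_plus_reflect: "wades_plus (\<lambda>t. \<gamma> (- t)) N \<longleftrightarrow> wades_minus \<gamma> N"
proof
  assume "wades_plus (\<lambda>t. \<gamma> (- t)) N"
  then obtain tm tp :: "nat \<Rightarrow> real" where "filterlim tm at_top sequentially"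
    "filterlim (\<lambda>n. tp n - tm n) at_top sequentially" "\<And>n. \<gamma> ` {- tp n..- tm n} \<subseteq> N"
    unfolding wades_plus_def image_reflect_atLeastAtMost by blast
  then show "wades_minus \<gamma> N"
    unfolding wades_minus_def filterlim_uminus_at_top
    by (intro exI[of _ "\<lambda>n. - tp n"] exI[of _ "\<lambda>n. - tm n"]) simp
next
  assume "wades_minus \<gamma> N"
  then obtain tm tp :: "nat \<Rightarrow> real" where "filterlim tp at_bot sequentially"
    "filterlim (\<lambda>n. tp n - tm n) at_top sequentially" "\<And>n. \<gamma> ` {tm n..tp n} \<subseteq> N"
    unfolding wades_minus_def by blast
  then show "wades_plus (\<lambda>t. \<gamma> (- t)) N"
    unfolding wades_plus_def image_reflect_atLeastAtMost filterlim_uminus_at_bot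
    by (intro exI[of _ "\<lambda>n. - tp n"] exI[of _ "\<lambda>n. - tm n"]) simp
qed

lemma flow_reflect:
  assumes "flow \<phi>"
  shows "flow (\<lambda>x t. \<phi> x (- t))"
proof -
  have "continuous_on UNIV (\<lambda>p. \<phi> (fst p) (snd p))"
    using assms by (simp add: flow_def)
  then have "continuous_on UNIV (\<lambda>p. (\<lambda>q. \<phi> (fst q) (snd q)) (fst p, - snd p))"
    by (rule continuous_on_compose2) (auto intro!: continuous_intros)
  with assms show ?thesis
    by (simp add: flow_def)
qed

lemma full_solution_reflect:
  "full_solution \<phi> \<gamma> \<Longrightarrow> full_solution (\<lambda>x t. \<phi> x (- t)) (\<lambda>t. \<gamma> (- t))"
  unfolding full_solution_def by (metis minus_add_distrib)

lemma Inv_reflect: "Inv (\<lambda>x t. \<phi> x (- t)) N = Inv \<phi> N"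
proof -
  have "range (\<lambda>t. f (- t)) = range f" for f :: "real \<Rightarrow> 'a"
    by (metis image_image surj_def minus_minus)
  then show ?thesis
    unfolding Inv_def by simp
qed

lemma isolating_neighborhood_reflect:
  "isolating_neighborhood (\<lambda>x t. \<phi> x (- t)) N \<longleftrightarrow> isolating_neighborhood \<phi> N"
  unfolding isolating_neighborhood_def Inv_reflect ..

lemma omega_limit_reflect: "omega_limit (\<lambda>t. \<gamma> (- t)) = alpha_limit \<gamma>"
proof -
  have "omega_limit (\<lambda>t. \<gamma> (- t)) = (\<Inter>t\<in>{0<..}. closure (\<gamma> ` {..- t}))"
    by (simp add: omega_limit_def image_reflect_atLeast)
  also have "\<dots> = (\<Inter>t\<in>uminus ` {0<..}. closure (\<gamma> ` {..t}))"
    by (simp only: image_image)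
  also have "\<dots> = alpha_limit \<gamma>"
    by (simp add: alpha_limit_def)
  finally show ?thesis .
qed

lemma tendsto_imp_in_omega_limit:
  fixes \<gamma> :: "real \<Rightarrow> 'a::topological_space"
  assumes "filterlim t at_top sequentially" and "(\<lambda>n. \<gamma> (t n)) \<longlonglongrightarrow> x"
  shows "x \<in> omega_limit \<gamma>"
  unfolding omega_limit_def
proof
  fix s :: real
  have "eventually (\<lambda>n. s \<le> t n) sequentially"
    using assms(1) unfolding filterlim_at_top by blast
  then have "eventually (\<lambda>n. \<gamma> (t n) \<in> closure (\<gamma> ` {s..})) sequentially"
    by eventually_elim (simp add: closure_subset[THEN subsetD])
  then show "x \<in> closure (\<gamma> ` {s..})"
    by (rule Lim_in_closed_set[OF closed_closure _ trivial_limit_sequentially assms(2)])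
qed

lemma tendsto_imp_in_Inv:
  assumes "flow \<phi>" and "closed N" and "y \<longlonglongrightarrow> x"
    and "\<And>t. eventually (\<lambda>n. \<phi> (y n) t \<in> N) sequentially"
  shows "x \<in> Inv \<phi> N"
proof -
  have "\<phi> x t \<in> N" for t
  proof -
    have "continuous_on UNIV (\<lambda>p. \<phi> (fst p) (snd p))"
      using assms(1) by (simp add: flow_def)
    from continuous_on_tendsto_compose[OF this tendsto_Pair[OF assms(3) tendsto_const]]
    have "(\<lambda>n. \<phi> (y n) t) \<longlonglongrightarrow> \<phi> x t"
      by simp
    then show ?thesis
      by (rule Lim_in_closed_set[OF assms(2,4) trivial_limit_sequentially])
  qed
  moreover have "\<phi> x 0 = x"
    using assms(1) by (simp add: flow_def)
  ultimately show ?thesis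
    unfolding Inv_def by (metis image_subset_iff mem_Collect_eq)
qed

lemma wades_plus_imp_Inv_inter_omega_limit:
  fixes \<phi> :: "'a::metric_space \<Rightarrow> real \<Rightarrow> 'a"
  assumes "flow \<phi>" and "compact N" and "full_solution \<phi> \<gamma>" and "wades_plus \<gamma> N"
  shows "Inv \<phi> N \<inter> omega_limit \<gamma> \<noteq> {}"
proof -
  have "\<forall>n::nat. \<exists>s\<ge>2 * real n. \<gamma> ` {s..s + 2 * real n} \<subseteq> N"
    using assms(4) unfolding wades_plus_iff by blast
  then obtain s where s_ge: "\<And>n. 2 * real n \<le> s n"
    and stay: "\<And>n. \<gamma> ` {s n..s n + 2 * real n} \<subseteq> N"
    by metis
  define c where "c n = s n + real n" for n
  have c_stay: "\<phi> (\<gamma> (c n)) t \<in> N" if "\<bar>t\<bar> \<le> real n" for n t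
  proof -
    have "c n + t \<in> {s n..s n + 2 * real n}"
      using that by (auto simp: c_def)
    moreover have "\<phi> (\<gamma> (c n)) t = \<gamma> (c n + t)"
      using assms(3) by (simp add: full_solution_def)
    ultimately show ?thesis
      using stay[of n] by (metis image_subset_iff)
  qed
  have "\<forall>n. \<gamma> (c n) \<in> N"
    using c_stay[where t = 0] assms(1) by (simp add: flow_def)
  then obtain x r where "x \<in> N" "strict_mono r" and "((\<lambda>n. \<gamma> (c n)) \<circ> r) \<longlonglongrightarrow> x"
    by (rule seq_compactE[OF compact_imp_seq_compact[OF assms(2)]])
  then have lim: "(\<lambda>k. \<gamma> (c (r k))) \<longlonglongrightarrow> x"
    by (simp add: o_def)
  have r_ge: "real k \<le> real (r k)" for k
    using seq_suble[OF \<open>strict_mono r\<close>] by simp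
  have "real k \<le> c (r k)" for k
    using s_ge[of "r k"] r_ge[of k] unfolding c_def by linarith
  then have "filterlim (\<lambda>k. c (r k)) at_top sequentially"
    by (intro filterlim_at_top_mono[OF filterlim_real_sequentially] always_eventually) blast
  then have "x \<in> omega_limit \<gamma>"
    using lim by (rule tendsto_imp_in_omega_limit)
  moreover have "x \<in> Inv \<phi> N"
  proof (rule tendsto_imp_in_Inv[OF assms(1) compact_imp_closed[OF assms(2)] lim])
    fix t :: real
    have "eventually (\<lambda>k. \<bar>t\<bar> \<le> real k) sequentially"
      using filterlim_real_sequentially unfolding filterlim_at_top by blast
    then show "eventually (\<lambda>k. \<phi> (\<gamma> (c (r k))) t \<in> N) sequentially"
      by eventually_elim (use c_stay r_ge order_trans in blast)
  qed
  ultimately show ?thesis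
    by blast
qed

lemma continuous_on_tube_ball:
  fixes \<phi> :: "'a::metric_space \<Rightarrow> 'b::topological_space \<Rightarrow> 'c::topological_space"
  assumes "continuous_on UNIV (\<lambda>p. \<phi> (fst p) (snd p))" and "compact K" and "open U"
    and "\<phi> x ` K \<subseteq> U"
  shows "\<exists>d>0. \<forall>y\<in>ball x d. \<phi> y ` K \<subseteq> U"
proof -
  define W where "W = (\<lambda>p. \<phi> (fst p) (snd p)) -` U"
  have "open W"
    unfolding W_def using open_vimage[OF assms(3,1)] .
  moreover have "{x} \<times> K \<subseteq> W"
    using assms(4) by (auto simp: W_def)
  ultimately obtain X where "x \<in> X" "open X" and X: "X \<times> K \<subseteq> W"
    using Elementary_Topology.tube_lemma[OF assms(2)] by metis
  then obtain d where "d > 0" "ball x d \<subseteq> X"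
    using open_contains_ball by blast
  moreover have "\<phi> y ` K \<subseteq> U" if "y \<in> X" for y
    using X that by (auto simp: W_def)
  ultimately show ?thesis
    by blast
qed

lemma flow_in_Inv:
  assumes "flow \<phi>" and "x \<in> Inv \<phi> N"
  shows "\<phi> x t \<in> Inv \<phi> N"
proof -
  have "\<phi> (\<phi> x t) s = \<phi> x (t + s)" for s
    using assms(1) by (simp add: flow_def)
  then show ?thesis
    using assms(2) unfolding Inv_def by auto
qed

lemma Inv_inter_omega_limit_imp_wades_plus:
  fixes \<phi> :: "'a::metric_space \<Rightarrow> real \<Rightarrow> 'a"
  assumes "flow \<phi>" and "Inv \<phi> N \<subseteq> interior N" and "full_solution \<phi> \<gamma>"
    and "x \<in> Inv \<phi> N" and "x \<in> omega_limit \<gamma>"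
  shows "wades_plus \<gamma> N"
  unfolding wades_plus_iff
proof
  fix T :: real
  have cont: "continuous_on UNIV (\<lambda>p. \<phi> (fst p) (snd p))"
    using assms(1) by (simp add: flow_def)
  have "\<phi> x ` {0..\<bar>T\<bar>} \<subseteq> interior N"
    using flow_in_Inv[OF assms(1,4)] assms(2) by blast
  then have "\<exists>d>0. \<forall>y\<in>ball x d. \<phi> y ` {0..\<bar>T\<bar>} \<subseteq> interior N"
    by (rule continuous_on_tube_ball[OF cont compact_Icc open_interior])
  then obtain d where "d > 0" and tube: "\<forall>y\<in>ball x d. \<phi> y ` {0..\<bar>T\<bar>} \<subseteq> interior N"
    by blast
  have "x \<in> closure (\<gamma> ` {\<bar>T\<bar> + 1..})"
    using assms(5) unfolding omega_limit_def by auto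
  then obtain s where s: "\<bar>T\<bar> + 1 \<le> s" "dist (\<gamma> s) x < d"
    using \<open>d > 0\<close> unfolding closure_approachable by blast
  have "\<gamma> ` {s..s + T} \<subseteq> \<phi> (\<gamma> s) ` {0..\<bar>T\<bar>}"
  proof (rule image_subsetI)
    fix v
    assume v: "v \<in> {s..s + T}"
    have "\<gamma> (s + (v - s)) = \<phi> (\<gamma> s) (v - s)"
      using assms(3) unfolding full_solution_def by blast
    then have "\<gamma> v = \<phi> (\<gamma> s) (v - s)"
      by simp
    then show "\<gamma> v \<in> \<phi> (\<gamma> s) ` {0..\<bar>T\<bar>}"
      using v by auto
  qed
  also have "\<dots> \<subseteq> N"
    using tube s(2) interior_subset by (fastforce simp: dist_commute)
  finally show "\<exists>s\<ge>T. \<gamma> ` {s..s + T} \<subseteq> N"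
    using s(1) by (intro exI[of _ s]) auto
qed

lemma wades_plus_iff_Inv_inter_omega_limit:
  fixes \<phi> :: "'a::metric_space \<Rightarrow> real \<Rightarrow> 'a"
  assumes "flow \<phi>" and "isolating_neighborhood \<phi> N" and "full_solution \<phi> \<gamma>"
  shows "wades_plus \<gamma> N \<longleftrightarrow> Inv \<phi> N \<inter> omega_limit \<gamma> \<noteq> {}"
proof
  assume "wades_plus \<gamma> N"
  then show "Inv \<phi> N \<inter> omega_limit \<gamma> \<noteq> {}"
    using wades_plus_imp_Inv_inter_omega_limit assms isolating_neighborhood_def by blast
next
  assume "Inv \<phi> N \<inter> omega_limit \<gamma> \<noteq> {}"
  then obtain x where "x \<in> Inv \<phi> N" "x \<in> omega_limit \<gamma>"
    by blast
  then show "wades_plus \<gamma> N"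
    using Inv_inter_omega_limit_imp_wades_plus assms isolating_neighborhood_def by blast
qed

theorem proposition5p21:
  fixes \<phi> :: "'a::metric_space \<Rightarrow> real \<Rightarrow> 'a" and N :: "'a set" and \<gamma> :: "real \<Rightarrow> 'a"
  assumes "locally compact (UNIV :: 'a set)"
    and "flow \<phi>"
    and "isolating_neighborhood \<phi> N"
    and "full_solution \<phi> \<gamma>"
  shows "(right_infinite (\<gamma> -` N) \<longleftrightarrow> wades_plus \<gamma> N) \<and>
         (wades_plus \<gamma> N \<longleftrightarrow> Inv \<phi> N \<inter> omega_limit \<gamma> \<noteq> {}) \<and>
         (left_infinite (\<gamma> -` N) \<longleftrightarrow> wades_minus \<gamma> N) \<and>
         (wades_minus \<gamma> N \<longleftrightarrow> Inv \<phi> N \<inter> alpha_limit \<gamma> \<noteq> {})"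
proof -
  have "wades_plus (\<lambda>t. \<gamma> (- t)) N \<longleftrightarrow>
      Inv (\<lambda>x t. \<phi> x (- t)) N \<inter> omega_limit (\<lambda>t. \<gamma> (- t)) \<noteq> {}"
    using assms(2-4) by (intro wades_plus_iff_Inv_inter_omega_limit flow_reflect
        isolating_neighborhood_reflect[THEN iffD2] full_solution_reflect)
  then have "wades_minus \<gamma> N \<longleftrightarrow> Inv \<phi> N \<inter> alpha_limit \<gamma> \<noteq> {}"
    by (simp add: wades_plus_reflect Inv_reflect omega_limit_reflect)
  moreover have "left_infinite (\<gamma> -` N) \<longleftrightarrow> wades_minus \<gamma> N"
  proof -
    have "(\<lambda>t. \<gamma> (- t)) -` N = uminus -` (\<gamma> -` N)"
      by auto
    then show ?thesis
      using right_infinite_vimage_iff_wades_plus[of "\<lambda>t. \<gamma> (- t)" N]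
      by (simp add: right_infinite_reflect wades_plus_reflect)
  qed
  ultimately show ?thesis
    using right_infinite_vimage_iff_wades_plus wades_plus_iff_Inv_inter_omega_limit[OF assms(2-4)]
    by blast
qed

end
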